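(* Let $N$ be a finite set, $f: 2^{N} \to \mathbb{R} \cup \{-\infty\}$ an M$^\natural$-concave function, $X, Y \in \mathrm{dom}\, f$ and $I \subseteq X \setminus Y$. Put $C = X \cap Y$, $X_0 = X \setminus Y$, $Y_0 = Y \setminus X$, and for $J \subseteq Y_0$ define $f_1(J) = f((X_0 \setminus I)\cup C \cup J)$ and $f_2(J) = f(I \cup C \cup (Y_0 \setminus J))$. For $q \in \mathbb{R}^{Y_0}$ define $g_1(q) = \max_{J \subseteq Y_0}\{f_1(J) - q(J)\}$ and $g_2(q) = \max_{J \subseteq Y_0}\{f_2(J) - q(J)\}$, where $q(J) = \sum_{j \in J} q_j$. Then for every $q \in \mathbb{R}^{Y_0}$, $$g_1(q) + g_2(-q) \geq f(X) + f(Y).$$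
   Context: For $f: 2^N \to \mathbb{R}\cup\{-\infty\}$, $\mathrm{dom}\, f = \{X \subseteq N : f(X) > -\infty\}$. Notation: $X - i = X \setminus \{i\}$, $Y + i = Y \cup \{i\}$, $X - i + j = (X\setminus\{i\})\cup\{j\}$, $Y + i - j = (Y \cup\{i\})\setminus\{j\}$. Conventions: $(-\infty)+a = a+(-\infty) = (-\infty)+(-\infty) = -\infty$ for $a \in \mathbb{R}$, $-\infty \le -\infty$, and a maximum over an empty set is $-\infty$. A function $f: 2^N \to \mathbb{R}\cup\{-\infty\}$ with $\mathrm{dom}\, f \neq \emptyset$ is M$^\natural$-concave if for all $X, Y \subseteq N$ and $i \in X \setminus Y$: $$f(X)+f(Y) \le \max\Big[ f(X-i)+f(Y+i),\ \max_{j \in Y\setminus X}\{ f(X-i+j)+f(Y+i-j)\}\Big].$$ *)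

theory Defs
  imports "HOL-Library.Extended_Real"
begin

text \<open>A set function on the subsets of a ground set N, with values in R \<union> {-\<infinity>}
  (modelled as ereal, never +\<infinity>).  dom f = subsets of N with value > -\<infinity>.\<close>

definition Mnat_concave :: "'a set \<Rightarrow> ('a set \<Rightarrow> ereal) \<Rightarrow> bool" where
  "Mnat_concave N f \<longleftrightarrow>
     (\<forall>X. X \<subseteq> N \<longrightarrow> f X \<noteq> \<infinity>) \<and>
     (\<exists>X. X \<subseteq> N \<and> f X > -\<infinity>) \<and>
     (\<forall>X Y i. X \<subseteq> N \<longrightarrow> Y \<subseteq> N \<longrightarrow> i \<in> X - Y \<longrightarrow>
        f X + f Y \<le> max (f (X - {i}) + f (insert i Y))
                         (Max ({-\<infinity>} \<union> {f (insert j (X - {i})) + f (insert i Y - {j}) | j. j \<in> Y - X})))"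

end

theory Submission imports Defs begin

text \<open>For fixed prices q, the maximal surplus h T = max over J \<subseteq> Y0 of f (T \<union> J) - q(J),
  taken over sets T disjoint from Y0, inherits from f the exchange inequality
  h P + h Q \<le> h (P - {i}) + h (insert i Q) for Q \<subseteq> P and i \<in> P - Q: apply the M\<natural>-exchange
  to maximizers P \<union> J1 and Q \<union> J2; an element that moves back is some j \<in> J2 - J1, and moving j
  from J2 to J1 leaves the total price unchanged. Iterating gives
  h X + h C \<le> h (X - I) + h (C \<union> I). Finally f X \<le> h X, f Y \<le> h C + q(Y0), h (X - I) = g1(q),
  and h (C \<union> I) + q(Y0) \<le> g2(-q) via J \<mapsto> Y0 - J.\<close>

lemma Mnat_concave_not_infty:
  assumes "Mnat_concave N f" "X \<subseteq> N"
  shows "f X \<noteq> \<infinity>"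
  using assms unfolding Mnat_concave_def by blast

lemma Mnat_concave_exchange:
  assumes "Mnat_concave N f" "X \<subseteq> N" "Y \<subseteq> N" "finite Y" "i \<in> X - Y"
  obtains "f X + f Y \<le> f (X - {i}) + f (insert i Y)"
    | j where "j \<in> Y - X" "f X + f Y \<le> f (insert j (X - {i})) + f (insert i Y - {j})"
proof -
  let ?S = "{f (insert j (X - {i})) + f (insert i Y - {j}) | j. j \<in> Y - X}"
  have ex: "f X + f Y \<le> max (f (X - {i}) + f (insert i Y)) (Max ({-\<infinity>} \<union> ?S))"
    using assms unfolding Mnat_concave_def by blast
  have "finite ?S"
    using \<open>finite Y\<close> by (simp add: setcompr_eq_image)
  then have "Max ({-\<infinity>} \<union> ?S) \<in> {-\<infinity>} \<union> ?S"
    by (intro Max_in) auto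
  then consider "Max ({-\<infinity>} \<union> ?S) = -\<infinity>" | j where "j \<in> Y - X"
      "Max ({-\<infinity>} \<union> ?S) = f (insert j (X - {i})) + f (insert i Y - {j})"
    by blast
  then show thesis
  proof cases
    case 1
    then show thesis using ex that(1) by simp
  next
    case 2
    then show thesis using ex that by (auto simp: le_max_iff_disj)
  qed
qed

lemma ereal_diff_add_diff_mono:
  fixes a b c d :: ereal
  assumes "a + b \<le> c + d" "x + y = x' + y'"
  shows "(a - ereal x) + (b - ereal y) \<le> (c - ereal x') + (d - ereal y')"
  using assms by (cases a; cases b; cases c; cases d) (auto simp: algebra_simps)

lemma ereal_add_le_cancel_chain:
  fixes a b d e g h :: ereal
  assumes "a + d \<le> e + g" "e + b \<le> h + d" "\<bar>d\<bar> \<noteq> \<infinity>"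
    and "a \<noteq> \<infinity>" "b \<noteq> \<infinity>" "e \<noteq> \<infinity>" "g \<noteq> \<infinity>" "h \<noteq> \<infinity>"
  shows "a + b \<le> h + g"
  using assms by (cases a; cases b; cases d; cases e; cases g; cases h) auto

lemma iterated_exchange:
  fixes g :: "'a set \<Rightarrow> ereal"
  assumes not_infty: "\<And>T. T \<subseteq> S \<Longrightarrow> g T \<noteq> \<infinity>"
    and exchange: "\<And>P Q i. P \<subseteq> S \<Longrightarrow> Q \<subseteq> P \<Longrightarrow> i \<in> P - Q \<Longrightarrow>
      g P + g Q \<le> g (P - {i}) + g (insert i Q)"
    and "finite I" "P \<subseteq> S" "Q \<subseteq> P" "I \<subseteq> P - Q"
  shows "g P + g Q \<le> g (P - I) + g (Q \<union> I)"
  using \<open>finite I\<close> \<open>Q \<subseteq> P\<close> \<open>I \<subseteq> P - Q\<close>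
  \<comment> \<open>Single exchanges cannot simply be chained (after one step Q is no longer below P);
    instead the step for i is combined with the induction hypothesis for insert i Q, and the common
    term g (insert i Q), finite unless g P + g Q = -\<infinity>, is cancelled.\<close>
proof (induction I arbitrary: Q rule: finite_induct)
  case empty
  then show ?case by simp
next
  case (insert i I)
  show ?case
  proof (cases "g P + g Q = -\<infinity>")
    case True
    show ?thesis unfolding True by simp
  next
    case False
    have sub: "P - {i} \<subseteq> S" "P - I \<subseteq> S" "P - I - {i} \<subseteq> S" "Q \<subseteq> S"
      "insert i Q \<subseteq> S" "insert i Q \<union> I \<subseteq> S"
      using insert.prems \<open>P \<subseteq> S\<close> by auto
    have "-\<infinity> < g P + g Q"
      using False by (cases "g P + g Q") auto
    also have "g P + g Q \<le> g (P - {i}) + g (insert i Q)"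
      using insert.prems \<open>P \<subseteq> S\<close> by (intro exchange) auto
    finally have "-\<infinity> < g (P - {i}) + g (insert i Q)" .
    then have "g (insert i Q) \<noteq> -\<infinity>"
      using not_infty[OF sub(1)] by auto
    then have fin: "\<bar>g (insert i Q)\<bar> \<noteq> \<infinity>"
      using not_infty[OF sub(5)] by auto
    have "g P + g (insert i Q) \<le> g (P - I) + g (insert i Q \<union> I)"
      using insert by (intro insert.IH) auto
    moreover have "g (P - I) + g Q \<le> g (P - I - {i}) + g (insert i Q)"
      using insert.prems insert.hyps(2) \<open>P \<subseteq> S\<close> by (intro exchange) auto
    ultimately have "g P + g Q \<le> g (P - I - {i}) + g (insert i Q \<union> I)"
      using fin not_infty[OF \<open>P \<subseteq> S\<close>] not_infty[OF sub(4)] not_infty[OF sub(2)]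
        not_infty[OF sub(6)] not_infty[OF sub(3)]
      by (rule ereal_add_le_cancel_chain)
    moreover have "P - I - {i} = P - insert i I" "insert i Q \<union> I = Q \<union> insert i I"
      by auto
    ultimately show ?thesis by simp
  qed
qed

definition max_surplus ::
  "('a set \<Rightarrow> ereal) \<Rightarrow> ('a \<Rightarrow> real) \<Rightarrow> 'a set \<Rightarrow> 'a set \<Rightarrow> ereal" where
  "max_surplus f q Y0 T = Max ((\<lambda>J. f (T \<union> J) - ereal (sum q J)) ` Pow Y0)"

lemma max_surplus_attained:
  assumes "finite Y0"
  obtains J where "J \<subseteq> Y0" "max_surplus f q Y0 T = f (T \<union> J) - ereal (sum q J)"
proof -
  have "max_surplus f q Y0 T \<in> (\<lambda>J. f (T \<union> J) - ereal (sum q J)) ` Pow Y0"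
    unfolding max_surplus_def using assms by (intro Max_in) auto
  then show thesis using that by auto
qed

lemma max_surplus_ge:
  assumes "finite Y0" "J \<subseteq> Y0"
  shows "f (T \<union> J) - ereal (sum q J) \<le> max_surplus f q Y0 T"
  unfolding max_surplus_def using assms by (intro Max_ge) auto

lemma max_surplus_not_infty:
  assumes "Mnat_concave N f" "finite Y0" "T \<union> Y0 \<subseteq> N"
  shows "max_surplus f q Y0 T \<noteq> \<infinity>"
proof -
  obtain J where J: "J \<subseteq> Y0" "max_surplus f q Y0 T = f (T \<union> J) - ereal (sum q J)"
    using max_surplus_attained[OF assms(2)] .
  have "f (T \<union> J) \<noteq> \<infinity>"
    using J(1) assms(3) by (intro Mnat_concave_not_infty[OF assms(1)]) auto
  then show ?thesis
    unfolding J(2) by (cases "f (T \<union> J)") simp_all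
qed

lemma max_surplus_eq_Max_setcompr:
  "max_surplus f q Y0 T = Max {f (T \<union> J) - ereal (sum q J) | J. J \<subseteq> Y0}"
  unfolding max_surplus_def by (simp add: setcompr_eq_image Pow_def)

lemma max_surplus_ge_self:
  assumes "finite Y0"
  shows "f T \<le> max_surplus f q Y0 T"
  using max_surplus_ge[OF assms, of "{}" f T q] by (simp add: zero_ereal_def)

lemma max_surplus_ge_full:
  assumes "finite Y0"
  shows "f (T \<union> Y0) \<le> max_surplus f q Y0 T + ereal (sum q Y0)"
  using max_surplus_ge[OF assms order_refl, of f T q]
  by (cases "f (T \<union> Y0)"; cases "max_surplus f q Y0 T") auto

lemma max_surplus_le_complement:
  assumes "finite Y0"
  shows "max_surplus f q Y0 T + ereal (sum q Y0)
    \<le> Max {f (T \<union> (Y0 - J)) - ereal (\<Sum>j\<in>J. - q j) | J. J \<subseteq> Y0}"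
proof -
  obtain K where K: "K \<subseteq> Y0" "max_surplus f q Y0 T = f (T \<union> K) - ereal (sum q K)"
    using max_surplus_attained[OF assms] .
  have "Y0 - (Y0 - K) = K"
    using K(1) by auto
  moreover have "(\<Sum>j\<in>Y0 - K. - q j) = sum q K - sum q Y0"
    using sum_diff[OF assms K(1), of q] by (simp add: sum_negf)
  ultimately have "max_surplus f q Y0 T + ereal (sum q Y0)
      = f (T \<union> (Y0 - (Y0 - K))) - ereal (\<Sum>j\<in>Y0 - K. - q j)"
    unfolding K(2) by (cases "f (T \<union> K)") auto
  also have "\<dots> \<le> Max {f (T \<union> (Y0 - J)) - ereal (\<Sum>j\<in>J. - q j) | J. J \<subseteq> Y0}"
    using assms by (intro Max_ge) (auto simp: setcompr_eq_image)
  finally show ?thesis .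
qed

lemma max_surplus_exchange:
  assumes "finite N" and M: "Mnat_concave N f" and "P \<subseteq> N" "Y0 \<subseteq> N" "P \<inter> Y0 = {}"
    and "Q \<subseteq> P" "i \<in> P - Q"
  shows "max_surplus f q Y0 P + max_surplus f q Y0 Q
    \<le> max_surplus f q Y0 (P - {i}) + max_surplus f q Y0 (insert i Q)"
proof -
  have fin: "finite Y0" using assms(1,4) by (rule rev_finite_subset)
  obtain J1 where J1: "J1 \<subseteq> Y0" "max_surplus f q Y0 P = f (P \<union> J1) - ereal (sum q J1)"
    using max_surplus_attained[OF fin] .
  obtain J2 where J2: "J2 \<subseteq> Y0" "max_surplus f q Y0 Q = f (Q \<union> J2) - ereal (sum q J2)"
    using max_surplus_attained[OF fin] .
  have fin12: "finite J1" "finite J2" using J1(1) J2(1) fin by (auto intro: finite_subset)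
  obtain J1' J2' where J': "J1' \<subseteq> Y0" "J2' \<subseteq> Y0"
    and sum_eq: "sum q J1 + sum q J2 = sum q J1' + sum q J2'"
    and le: "f (P \<union> J1) + f (Q \<union> J2) \<le> f ((P - {i}) \<union> J1') + f (insert i Q \<union> J2')"
  proof (rule Mnat_concave_exchange[OF M, of "P \<union> J1" "Q \<union> J2" i])
    show "P \<union> J1 \<subseteq> N" "Q \<union> J2 \<subseteq> N" "i \<in> P \<union> J1 - (Q \<union> J2)"
      using assms J1(1) J2(1) by auto
    then show "finite (Q \<union> J2)"
      using \<open>finite N\<close> by (auto intro: finite_subset)
  next
    assume "f (P \<union> J1) + f (Q \<union> J2) \<le> f (P \<union> J1 - {i}) + f (insert i (Q \<union> J2))"
    moreover have "P \<union> J1 - {i} = (P - {i}) \<union> J1"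
      using assms J1(1) by auto
    ultimately show thesis
      using that[OF J1(1) J2(1)] by simp
  next
    fix j assume j: "j \<in> Q \<union> J2 - (P \<union> J1)"
      and le: "f (P \<union> J1) + f (Q \<union> J2) \<le> f (insert j (P \<union> J1 - {i})) + f (insert i (Q \<union> J2) - {j})"
    have "j \<in> J2" "j \<notin> J1"
      using j assms(6) by auto
    then have "sum q J1 + sum q J2 = sum q (insert j J1) + sum q (J2 - {j})"
      using fin12 by (simp add: sum.remove[of J2 j])
    moreover have "insert j (P \<union> J1 - {i}) = (P - {i}) \<union> insert j J1"
      "insert i (Q \<union> J2) - {j} = insert i Q \<union> (J2 - {j})"
      using assms J1(1) j by auto
    ultimately show thesis
      using that[of "insert j J1" "J2 - {j}"] le J1(1) J2(1) \<open>j \<in> J2\<close> by auto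
  qed
  have "max_surplus f q Y0 P + max_surplus f q Y0 Q
      \<le> (f ((P - {i}) \<union> J1') - ereal (sum q J1')) + (f (insert i Q \<union> J2') - ereal (sum q J2'))"
    unfolding J1(2) J2(2) using le sum_eq by (rule ereal_diff_add_diff_mono)
  also have "\<dots> \<le> max_surplus f q Y0 (P - {i}) + max_surplus f q Y0 (insert i Q)"
    using fin J' by (intro add_mono max_surplus_ge)
  finally show ?thesis .
qed

lemma max_surplus_multi_exchange:
  assumes "finite N" "Mnat_concave N f" "P \<subseteq> N" "Y0 \<subseteq> N" "P \<inter> Y0 = {}"
    and "Q \<subseteq> P" "I \<subseteq> P - Q"
  shows "max_surplus f q Y0 P + max_surplus f q Y0 Q
    \<le> max_surplus f q Y0 (P - I) + max_surplus f q Y0 (Q \<union> I)"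
proof (rule iterated_exchange[where S = "N - Y0"])
  have "finite Y0"
    using assms(1,4) by (rule rev_finite_subset)
  then show "max_surplus f q Y0 T \<noteq> \<infinity>" if "T \<subseteq> N - Y0" for T
    using that assms(4) by (intro max_surplus_not_infty[OF assms(2)]) auto
  show "max_surplus f q Y0 P' + max_surplus f q Y0 Q'
      \<le> max_surplus f q Y0 (P' - {i}) + max_surplus f q Y0 (insert i Q')"
    if "P' \<subseteq> N - Y0" "Q' \<subseteq> P'" "i \<in> P' - Q'" for P' Q' i
    using that assms(1,4) by (intro max_surplus_exchange[OF _ assms(2)]) auto
  show "finite I"
    using assms(1,3,7) by (auto intro: finite_subset)
qed (use assms in auto)

theorem lemma1:
  fixes N :: "'a set" and f :: "'a set \<Rightarrow> ereal" and X Y I :: "'a set" and q :: "'a \<Rightarrow> real"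
  assumes "finite N"
    and "Mnat_concave N f"
    and "X \<subseteq> N" and "Y \<subseteq> N" and "f X > -\<infinity>" and "f Y > -\<infinity>"
    and "I \<subseteq> X - Y"
  shows "let C = X \<inter> Y; X0 = X - Y; Y0 = Y - X;
             f1 = (\<lambda>J. f ((X0 - I) \<union> C \<union> J));
             f2 = (\<lambda>J. f (I \<union> C \<union> (Y0 - J)));
             g1 = (\<lambda>q. Max {f1 J - ereal (\<Sum>j\<in>J. q j) | J. J \<subseteq> Y0});
             g2 = (\<lambda>q. Max {f2 J - ereal (\<Sum>j\<in>J. q j) | J. J \<subseteq> Y0})
         in g1 q + g2 (\<lambda>j. - q j) \<ge> f X + f Y"
proof -
  define C where "C = X \<inter> Y"
  define Y0 where "Y0 = Y - X"
  let ?h = "max_surplus f q Y0"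
  have fin: "finite Y0"
    using assms(1,4) unfolding Y0_def by (auto intro: finite_subset)
  have sets: "C \<union> Y0 = Y" "X - I = (X - Y - I) \<union> C" "I \<union> C = C \<union> I"
    using assms(7) unfolding C_def Y0_def by auto
  have "f X + f Y \<le> ?h X + (?h C + ereal (sum q Y0))"
    using max_surplus_ge_self[OF fin] max_surplus_ge_full[OF fin, of f C q]
    unfolding sets by (rule add_mono)
  also have "\<dots> = (?h X + ?h C) + ereal (sum q Y0)"
    by (simp add: add.assoc)
  also have "\<dots> \<le> (?h (X - I) + ?h (C \<union> I)) + ereal (sum q Y0)"
    using assms unfolding C_def Y0_def by (intro add_right_mono max_surplus_multi_exchange) auto
  also have "\<dots> = ?h (X - I) + (?h (C \<union> I) + ereal (sum q Y0))"
    by (simp add: add.assoc)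
  also have "\<dots> \<le> ?h ((X - Y - I) \<union> C)
      + Max {f (I \<union> C \<union> (Y0 - J)) - ereal (\<Sum>j\<in>J. - q j) | J. J \<subseteq> Y0}"
    unfolding sets using max_surplus_le_complement[OF fin] by (rule add_left_mono)
  finally show ?thesis
    unfolding Let_def max_surplus_eq_Max_setcompr C_def Y0_def by (simp add: Un_ac)
qed

end
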